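(* Consider the no-show model with homogeneous costs and the network $(\mathcal G,\mathcal E)$ in the context. For $j\in[N]$, $\rho\ge0$, $\mathbf s\in\mathcal S$ and $p\ge1$, assign to each arc $(k,\ell)\in\mathcal E$ the length $g_{k\ell j}=f_{1j}(1-\bar\lambda_1,y_1)$ if $k=\texttt S$ and $\ell=(\bar\lambda_1,y_1)$; $g_{k\ell j}=f_{ij}(\bar\lambda_{i-1}-\bar\lambda_i+1,y_i)$ if $k=(\bar\lambda_{i-1},y_{i-1})\in\mathcal L(i-1)$ and $\ell=(\bar\lambda_i,y_i)\in\mathcal L(i)$, $i\in[2,n]$; $g_{k\ell j}=0$ if $\ell=\texttt E$. Then $$\omega'_j(\rho,\mathbf s)=\max_{\mathbf z}\sum_{(k,\ell)\in\mathcal E}g_{k\ell j}z_{k\ell}\ \text{ s.t. }\sum_{\ell:(k,\ell)\in\mathcal E}z_{k\ell}-\sum_{\ell:(\ell,k)\in\mathcal E}z_{\ell k}=\begin{cases}1&k=\texttt S\\0&k\ne\texttt S,\texttt E\\-1&k=\texttt E\end{cases}\ \forall k\in\mathcal G,\quad z_{k\ell}\ge0\ \forall(k,\ell)\in\mathcal E,$$ where $\omega'_j(\rho,\mathbf s)=\sup_{\boldsymbol\xi\in\Xi}\{g(\mathbf s,\boldsymbol\xi)-\rho\|\boldsymbol\xi-\widehat{\boldsymbol\xi}^j\|_p^p\}$.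
   Context: Notation: $[m]=\{1,\dots,m\}$. $n,N\ge1$, $T>0$, $\mathcal S=\{\mathbf s\in\mathbb R^n:\mathbf s\ge0,\sum_is_i\le T\}$. Homogeneous costs $c_1=\dots=c_n=1$, $d_1=\dots=d_n=d_0\ge0$, overtime $C\ge0$. Bounds $0\le u^L_i<u^U_i<\infty$; integer $K\in[n]$. $\Lambda=\{\boldsymbol\lambda\in\{0,1\}^n:\sum_i(1-\lambda_i)\le K\}$, $\Xi=\{(\boldsymbol\mu,\boldsymbol\lambda)\in\mathbb R^n\times\Lambda:u^L_i\lambda_i\le\mu_i\le u^U_i\lambda_i\}$, data $\widehat{\boldsymbol\xi}^j=(\widehat{\boldsymbol\mu}^j,\widehat{\boldsymbol\lambda}^j)\in\Xi$. $g(\mathbf s,\boldsymbol\xi)$ is the optimal value of $\min_{\mathbf w\in\mathbb R^{n+1},\mathbf v\in\mathbb R^n}\sum_{i}(c_i\lambda_iw_i+d_iv_i)+Cw_{n+1}$ s.t. $w_i-v_{i-1}=\mu_{i-1}+w_{i-1}-s_{i-1}$ ($i=2,\dots,n+1$), $\mathbf w\ge0,w_1=0,\mathbf v\ge0$. For $\lambda_i\in\{0,1\}$, $y_i\in\mathbb R$: $f_{ij}(\lambda_i,y_i)=\sup_{u^L_i\lambda_i\le\mu_i\le u^U_i\lambda_i}\{y_i(\mu_i-s_i)-\rho|\mu_i-\widehat\mu^j_i|^p-\rho|\lambda_i-\widehat\lambda^j_i|^p\}$. Network: $\mathcal Y_i=\{-d_0+m:m=0,\dots,n-i\}\cup\{C+m:m=0,\dots,n-i\}$,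 layers $\mathcal L(i)=\{(\bar\lambda,y):\bar\lambda\in\{0,\dots,K\},y\in\mathcal Y_i\}$, nodes $\mathcal G=\bigcup_{i=1}^n\mathcal L(i)\cup\{\texttt S,\texttt E\}$. Arcs: from $\texttt S$ to each $(\bar\lambda_1,y_1)\in\mathcal L(1)$ with $\bar\lambda_1\in\{0,1\}$; for $i\in[2,n]$ from $(\bar\lambda_{i-1},y_{i-1})\in\mathcal L(i-1)$ to $(\bar\lambda_i,y_i)\in\mathcal L(i)$ whenever $\bar\lambda_i\in\{\bar\lambda_{i-1},\bar\lambda_{i-1}+1\}$ and $y_{i-1}\in\{-d_0,\ y_i+(\bar\lambda_{i-1}-\bar\lambda_i+1)\}$; and from each node of $\mathcal L(n)$ to $\texttt E$. *)

theory Defs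
  imports Complex_Main
begin

text \<open>Vectors in R^n are functions nat => real, indexed by 1..n (values outside are irrelevant).
  Homogeneous costs: c_i = 1, d_i = d0.\<close>

definition g_val :: "nat \<Rightarrow> real \<Rightarrow> real \<Rightarrow> (nat \<Rightarrow> real) \<Rightarrow> (nat \<Rightarrow> real) \<Rightarrow> (nat \<Rightarrow> real) \<Rightarrow> real" where
  "g_val n d0 C s mu lam = Inf {(\<Sum>i=1..n. 1 * lam i * w i + d0 * v i) + C * w (n+1) | w v.
      (\<forall>i\<in>{1..n+1}. w i \<ge> 0) \<and> w 1 = 0 \<and> (\<forall>i\<in>{1..n}. v i \<ge> 0) \<and>
      (\<forall>i\<in>{2..n+1}. w i - v (i-1) = mu (i-1) + w (i-1) - s (i-1))}"

definition in_Xi :: "nat \<Rightarrow> nat \<Rightarrow> (nat \<Rightarrow> real) \<Rightarrow> (nat \<Rightarrow> real) \<Rightarrow> (nat \<Rightarrow> real) \<Rightarrow> (nat \<Rightarrow> real) \<Rightarrow> bool" where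
  "in_Xi n K uL uU mu lam \<longleftrightarrow>
     (\<forall>i\<in>{1..n}. lam i \<in> {0,1}) \<and> (\<Sum>i=1..n. 1 - lam i) \<le> real K \<and>
     (\<forall>i\<in>{1..n}. uL i * lam i \<le> mu i \<and> mu i \<le> uU i * lam i)"

definition omega' :: "nat \<Rightarrow> nat \<Rightarrow> real \<Rightarrow> real \<Rightarrow> (nat \<Rightarrow> real) \<Rightarrow> (nat \<Rightarrow> real) \<Rightarrow> real \<Rightarrow>
    (nat \<Rightarrow> real) \<Rightarrow> (nat \<Rightarrow> real) \<Rightarrow> (nat \<Rightarrow> real) \<Rightarrow> real \<Rightarrow> real" where
  "omega' n K d0 C uL uU p muh lamh s rho = Sup {g_val n d0 C s mu lam
      - rho * ((\<Sum>i=1..n. \<bar>mu i - muh i\<bar> powr p) + (\<Sum>i=1..n. \<bar>lam i - lamh i\<bar> powr p)) | mu lam.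
      in_Xi n K uL uU mu lam}"

definition f_val :: "(nat \<Rightarrow> real) \<Rightarrow> (nat \<Rightarrow> real) \<Rightarrow> real \<Rightarrow> (nat \<Rightarrow> real) \<Rightarrow> (nat \<Rightarrow> real) \<Rightarrow>
    (nat \<Rightarrow> real) \<Rightarrow> real \<Rightarrow> nat \<Rightarrow> real \<Rightarrow> real \<Rightarrow> real" where
  "f_val uL uU p muh lamh s rho i l y = Sup {y * (mu - s i) - rho * \<bar>mu - muh i\<bar> powr p
      - rho * \<bar>l - lamh i\<bar> powr p | mu. uL i * l \<le> mu \<and> mu \<le> uU i * l}"

text \<open>Nodes of the network: source S, sink E, and layer nodes Nd i lb y = (lb, y) in L(i).\<close>
datatype node = Src | Snk | Nd nat nat real

definition Ycal :: "nat \<Rightarrow> real \<Rightarrow> real \<Rightarrow> nat \<Rightarrow> real set" where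
  "Ycal n d0 C i = {- d0 + real m | m. m \<le> n - i} \<union> {C + real m | m. m \<le> n - i}"

definition Layer :: "nat \<Rightarrow> nat \<Rightarrow> real \<Rightarrow> real \<Rightarrow> nat \<Rightarrow> node set" where
  "Layer n K d0 C i = {Nd i lb y | lb y. lb \<le> K \<and> y \<in> Ycal n d0 C i}"

definition Nodes :: "nat \<Rightarrow> nat \<Rightarrow> real \<Rightarrow> real \<Rightarrow> node set" where
  "Nodes n K d0 C = (\<Union>i\<in>{1..n}. Layer n K d0 C i) \<union> {Src, Snk}"

definition Arcs :: "nat \<Rightarrow> nat \<Rightarrow> real \<Rightarrow> real \<Rightarrow> (node \<times> node) set" where
  "Arcs n K d0 C =
     {(Src, Nd 1 lb y) | lb y. Nd 1 lb y \<in> Layer n K d0 C 1 \<and> lb \<in> {0,1}}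
   \<union> {(Nd (i-1) lb' y', Nd i lb y) | i lb' y' lb y. 2 \<le> i \<and> i \<le> n \<and>
        Nd (i-1) lb' y' \<in> Layer n K d0 C (i-1) \<and> Nd i lb y \<in> Layer n K d0 C i \<and>
        (lb = lb' \<or> lb = lb' + 1) \<and> (y' = - d0 \<or> y' = y + (real lb' - real lb + 1))}
   \<union> {(k, Snk) | k. k \<in> Layer n K d0 C n}"

text \<open>Arc lengths g_{kl j} (F stands for f_{.j}: layer index, lambda, y).\<close>
fun arc_len :: "(nat \<Rightarrow> real \<Rightarrow> real \<Rightarrow> real) \<Rightarrow> node \<times> node \<Rightarrow> real" where
  "arc_len F (Src, Nd i lb y) = F 1 (1 - real lb) y"
| "arc_len F (Nd i' lb' y', Nd i lb y) = F i (real lb' - real lb + 1) y"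
| "arc_len F _ = 0"

definition flow_feasible :: "node set \<Rightarrow> (node \<times> node) set \<Rightarrow> (node \<times> node \<Rightarrow> real) \<Rightarrow> bool" where
  "flow_feasible G A z \<longleftrightarrow>
     (\<forall>a\<in>A. z a \<ge> 0) \<and>
     (\<forall>k\<in>G. (\<Sum>l\<in>{l. (k,l) \<in> A}. z (k,l)) - (\<Sum>l\<in>{l. (l,k) \<in> A}. z (l,k))
              = (if k = Src then 1 else if k = Snk then -1 else 0))"

end

theory Submission
  imports Defs "HOL-Library.FuncSet"
begin

text \<open>By LP duality the second-stage cost \<open>g(s, \<xi>)\<close> is the maximum of
  \<open>\<Sum>\<^sub>k y\<^sub>k (\<mu>\<^sub>k - s\<^sub>k)\<close> over the dual polyhedron \<open>y\<^sub>k \<ge> -d0\<close>,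
  \<open>y\<^sub>k\<^sub>-\<^sub>1 \<le> y\<^sub>k + \<lambda>\<^sub>k\<close>, \<open>y\<^sub>n \<le> C\<close>, and the maximum is attained at a vertex read off
  backwards from the Lindley waiting times, whose coordinates lie in \<open>\<Y>\<^sub>k\<close>. Hence \<open>\<omega>'\<^sub>j\<close> is
  the maximum of \<open>\<Sum>\<^sub>k f\<^sub>k\<^sub>j(\<lambda>\<^sub>k, y\<^sub>k)\<close> over no-show patterns \<open>\<lambda> \<in> \<Lambda>\<close> and
  dual vertices \<open>y\<close>. Recording at stage \<open>k\<close> the number of no-shows so far together with
  \<open>y\<^sub>k\<close>, these pairs are exactly the source-sink paths of the network, so \<open>\<omega>'\<^sub>j\<close> is a
  longest-path value. The indicator flow of a longest path attains it, and the longest tails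
  from each node form potentials bounding every feasible flow from above.\<close>

section \<open>The second-stage problem and its dual\<close>

lemma sum_mult_diff_Suc_by_parts:
  fixes y w :: "nat \<Rightarrow> 'a::comm_ring"
  assumes "1 \<le> n"
  shows "(\<Sum>k=1..n. y k * (w (Suc k) - w k)) =
         (\<Sum>k=2..n. (y (k-1) - y k) * w k) + y n * w (Suc n) - y 1 * w 1"
  using assms
proof (induction n rule: dec_induct)
  case base
  then show ?case by (simp add: algebra_simps)
next
  case (step n)
  then have "(\<Sum>k=2..Suc n. (y (k-1) - y k) * w k) = (\<Sum>k=2..n. (y (k-1) - y k) * w k) + (y n - y (Suc n)) * w (Suc n)"
    by simp
  with step.IH show ?case by (simp add: algebra_simps)
qed

definition recourse_feasible ::
    "nat \<Rightarrow> (nat \<Rightarrow> real) \<Rightarrow> (nat \<Rightarrow> real) \<Rightarrow> (nat \<Rightarrow> real) \<Rightarrow> (nat \<Rightarrow> real) \<Rightarrow> bool" where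
  "recourse_feasible n s mu w v \<longleftrightarrow>
     (\<forall>i\<in>{1..n+1}. w i \<ge> 0) \<and> w 1 = 0 \<and> (\<forall>i\<in>{1..n}. v i \<ge> 0) \<and>
     (\<forall>i\<in>{2..n+1}. w i - v (i-1) = mu (i-1) + w (i-1) - s (i-1))"

definition recourse_cost ::
    "nat \<Rightarrow> real \<Rightarrow> real \<Rightarrow> (nat \<Rightarrow> real) \<Rightarrow> (nat \<Rightarrow> real) \<Rightarrow> (nat \<Rightarrow> real) \<Rightarrow> real" where
  "recourse_cost n d0 C lam w v = (\<Sum>i=1..n. 1 * lam i * w i + d0 * v i) + C * w (n+1)"

lemma g_val_eq_Inf_recourse_cost:
  "g_val n d0 C s mu lam = Inf {recourse_cost n d0 C lam w v | w v. recourse_feasible n s mu w v}"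
  unfolding g_val_def recourse_cost_def recourse_feasible_def ..

definition dual_feasible :: "nat \<Rightarrow> real \<Rightarrow> real \<Rightarrow> (nat \<Rightarrow> real) \<Rightarrow> (nat \<Rightarrow> real) \<Rightarrow> bool" where
  "dual_feasible n d0 C lam y \<longleftrightarrow>
     (\<forall>k\<in>{1..n}. - d0 \<le> y k) \<and> (\<forall>k\<in>{2..n}. y (k-1) \<le> y k + lam k) \<and> y n \<le> C"

lemma recourse_cost_minus_dual:
  fixes y :: "nat \<Rightarrow> real"
  assumes n: "1 \<le> n" and feas: "recourse_feasible n s mu w v"
  shows "recourse_cost n d0 C lam w v - (\<Sum>k=1..n. y k * (mu k - s k)) =
         (\<Sum>k=2..n. (lam k + y k - y (k-1)) * w k) + (C - y n) * w (n+1) + (\<Sum>k=1..n. (d0 + y k) * v k)"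
proof -
  have w1: "w 1 = 0" using feas unfolding recourse_feasible_def by blast
  have flow: "mu k - s k = (w (Suc k) - w k) - v k" if "k \<in> {1..n}" for k
    using feas that unfolding recourse_feasible_def by (auto dest!: bspec[of _ _ "Suc k"])
  have "(\<Sum>k=1..n. y k * (mu k - s k)) = (\<Sum>k=1..n. y k * (w (Suc k) - w k) - y k * v k)"
    by (rule sum.cong) (simp_all add: flow algebra_simps)
  also have "\<dots> = (\<Sum>k=1..n. y k * (w (Suc k) - w k)) - (\<Sum>k=1..n. y k * v k)"
    by (rule sum_subtractf)
  also have "\<dots> = (\<Sum>k=2..n. (y (k-1) - y k) * w k) + y n * w (Suc n) - (\<Sum>k=1..n. y k * v k)"
    using sum_mult_diff_Suc_by_parts[OF n, of y w] w1 by simp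
  finally have dual: "(\<Sum>k=1..n. y k * (mu k - s k)) = \<dots>" .
  have "{1..n} = insert 1 {2..n}" using n by auto
  then have "(\<Sum>i=1..n. lam i * w i) = (\<Sum>i=2..n. lam i * w i)" using w1 by simp
  then show ?thesis
    unfolding recourse_cost_def dual
    by (simp add: algebra_simps sum.distrib sum_subtractf sum_distrib_left)
qed

lemma weak_duality:
  assumes n: "1 \<le> n" and lam: "\<forall>k\<in>{1..n}. 0 \<le> lam k"
    and dual: "dual_feasible n d0 C lam y" and feas: "recourse_feasible n s mu w v"
  shows "(\<Sum>k=1..n. y k * (mu k - s k)) \<le> recourse_cost n d0 C lam w v"
proof -
  have w: "\<forall>i\<in>{1..n+1}. 0 \<le> w i" and v: "\<forall>i\<in>{1..n}. 0 \<le> v i"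
    using feas unfolding recourse_feasible_def by auto
  have "0 \<le> (\<Sum>k=2..n. (lam k + y k - y (k-1)) * w k)"
  proof (intro sum_nonneg mult_nonneg_nonneg)
    fix k assume "k \<in> {2..n}"
    moreover have "y (k-1) \<le> y k + lam k" using dual calculation unfolding dual_feasible_def by blast
    ultimately show "0 \<le> lam k + y k - y (k-1)" "0 \<le> w k" using w by auto
  qed
  moreover have "0 \<le> (C - y n) * w (n+1)"
    using dual w unfolding dual_feasible_def by (intro mult_nonneg_nonneg) auto
  moreover have "0 \<le> (\<Sum>k=1..n. (d0 + y k) * v k)"
  proof (intro sum_nonneg mult_nonneg_nonneg)
    fix k assume "k \<in> {1..n}"
    moreover have "- d0 \<le> y k" using dual calculation unfolding dual_feasible_def by blast
    ultimately show "0 \<le> d0 + y k" "0 \<le> v k" using v by auto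
  qed
  ultimately show ?thesis
    using recourse_cost_minus_dual[OF n feas, of d0 C lam y] by linarith
qed

text \<open>Lindley's recursion: waiting times and server idle times when service \<open>k\<close> overruns its
  slot by \<open>c k\<close>.\<close>

fun lindley_wait :: "(nat \<Rightarrow> real) \<Rightarrow> nat \<Rightarrow> real" where
  "lindley_wait c 0 = 0"
| "lindley_wait c (Suc k) = (if k = 0 then 0 else max 0 (lindley_wait c k + c k))"

definition lindley_idle :: "(nat \<Rightarrow> real) \<Rightarrow> nat \<Rightarrow> real" where
  "lindley_idle c k = max 0 (- (lindley_wait c k + c k))"

lemma lindley_wait_nonneg: "0 \<le> lindley_wait c k"
  by (cases k) auto

lemma recourse_feasible_lindley:
  fixes mu s :: "nat \<Rightarrow> real"
  defines "c \<equiv> \<lambda>k. mu k - s k"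
  shows "recourse_feasible n s mu (lindley_wait c) (lindley_idle c)"
  unfolding recourse_feasible_def
proof (intro conjI ballI)
  fix i assume "i \<in> {2..n+1}"
  then obtain k where "i = Suc k" "1 \<le> k" by (cases i) auto
  then show "lindley_wait c i - lindley_idle c (i-1) = mu (i-1) + lindley_wait c (i-1) - s (i-1)"
    by (simp add: lindley_idle_def c_def max_def)
qed (auto simp: lindley_wait_nonneg lindley_idle_def)

text \<open>An optimal dual solution: \<open>y k\<close> is the marginal cost of delaying the end of service \<open>k\<close>,
  which is absorbed by idle time (saving \<open>d0\<close>) unless patient \<open>k + 1\<close> waits, in which case it
  propagates to the next patient (costing \<open>lam (k + 1)\<close>) or, after the last one, to overtime.\<close>

function dual_greedy ::
    "nat \<Rightarrow> real \<Rightarrow> real \<Rightarrow> (nat \<Rightarrow> real) \<Rightarrow> (nat \<Rightarrow> real) \<Rightarrow> nat \<Rightarrow> real" where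
  "dual_greedy n d0 C lam w k =
     (if 0 < w (Suc k) then (if n \<le> k then C else dual_greedy n d0 C lam w (Suc k) + lam (Suc k))
      else - d0)"
  by auto
termination by (relation "measure (\<lambda>(n, d0, C, lam, w, k). n - k)") auto

declare dual_greedy.simps [simp del]

lemma dual_greedy_last:
  "dual_greedy n d0 C lam w n = (if 0 < w (Suc n) then C else - d0)"
  by (simp add: dual_greedy.simps)

lemma dual_greedy_less:
  "k < n \<Longrightarrow> dual_greedy n d0 C lam w k =
     (if 0 < w (Suc k) then dual_greedy n d0 C lam w (Suc k) + lam (Suc k) else - d0)"
  by (simp add: dual_greedy.simps[of n d0 C lam w k])

lemma dual_greedy_ge:
  assumes "- d0 \<le> C" and lam: "\<forall>k\<in>{1..n}. 0 \<le> lam k"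
  shows "k \<le> n \<Longrightarrow> - d0 \<le> dual_greedy n d0 C lam w k"
proof (induction k rule: inc_induct)
  case base
  then show ?case using assms by (simp add: dual_greedy_last)
next
  case (step k)
  moreover have "0 \<le> lam (Suc k)" using lam step.hyps by auto
  ultimately show ?case by (simp add: dual_greedy_less)
qed

lemma dual_feasible_dual_greedy:
  assumes "- d0 \<le> C" and lam: "\<forall>k\<in>{1..n}. 0 \<le> lam k"
  shows "dual_feasible n d0 C lam (dual_greedy n d0 C lam w)"
  unfolding dual_feasible_def
proof (intro conjI ballI)
  fix k assume "k \<in> {2..n}"
  moreover have "- d0 \<le> dual_greedy n d0 C lam w k" "0 \<le> lam k"
    using calculation dual_greedy_ge[OF assms] lam by auto
  ultimately show "dual_greedy n d0 C lam w (k-1) \<le> dual_greedy n d0 C lam w k + lam k"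
    using dual_greedy_less[of "k-1" n d0 C lam w] by auto
qed (use dual_greedy_ge[OF assms] assms(1) in \<open>auto simp: dual_greedy_last\<close>)

lemma dual_greedy_in_Ycal:
  assumes "k \<le> n" and lam: "\<forall>k\<in>{1..n}. lam k \<in> {0, 1}"
  shows "dual_greedy n d0 C lam w k \<in> Ycal n d0 C k"
  using assms(1)
proof (induction k rule: inc_induct)
  case base
  show ?case by (force simp: dual_greedy_last Ycal_def)
next
  case (step k)
  have "dual_greedy n d0 C lam w (Suc k) + lam (Suc k) \<in> Ycal n d0 C k"
  proof -
    obtain m b where "m \<le> n - Suc k" and b: "b = - d0 \<or> b = C"
      and y: "dual_greedy n d0 C lam w (Suc k) = b + real m"
      using step.IH unfolding Ycal_def by blast
    have "lam (Suc k) = 0 \<or> lam (Suc k) = 1" using lam step.hyps by auto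
    then obtain m' where "m' \<le> n - k" "lam (Suc k) + real m = real m'"
    proof
      assume "lam (Suc k) = 0"
      then show ?thesis using that[of m] \<open>m \<le> n - Suc k\<close> by simp
    next
      assume "lam (Suc k) = 1"
      then show ?thesis using that[of "Suc m"] \<open>m \<le> n - Suc k\<close> step.hyps by simp
    qed
    then have "dual_greedy n d0 C lam w (Suc k) + lam (Suc k) = b + real m'" using y by simp
    with b \<open>m' \<le> n - k\<close> show ?thesis unfolding Ycal_def by blast
  qed
  then show ?case using step.hyps by (force simp: dual_greedy_less Ycal_def)
qed

lemma complementary_slackness_lindley:
  fixes n :: nat and d0 C :: real and lam mu s :: "nat \<Rightarrow> real"
  defines "c \<equiv> \<lambda>k. mu k - s k"
  defines "y \<equiv> dual_greedy n d0 C lam (lindley_wait c)"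
  assumes n: "1 \<le> n"
  shows "recourse_cost n d0 C lam (lindley_wait c) (lindley_idle c) = (\<Sum>k=1..n. y k * (mu k - s k))"
proof -
  have feas: "recourse_feasible n s mu (lindley_wait c) (lindley_idle c)"
    unfolding c_def by (rule recourse_feasible_lindley)
  have "(\<Sum>k=2..n. (lam k + y k - y (k-1)) * lindley_wait c k) = 0"
  proof (rule sum.neutral, rule ballI)
    fix k assume k: "k \<in> {2..n}"
    then have "0 < lindley_wait c k \<Longrightarrow> y (k-1) = y k + lam k"
      using dual_greedy_less[of "k-1" n d0 C lam "lindley_wait c"] unfolding y_def by auto
    then show "(lam k + y k - y (k-1)) * lindley_wait c k = 0"
      using lindley_wait_nonneg[of c k] by force
  qed
  moreover have "(C - y n) * lindley_wait c (n+1) = 0"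
    using lindley_wait_nonneg[of c "n+1"] by (auto simp: y_def dual_greedy_last)
  moreover have "(\<Sum>k=1..n. (d0 + y k) * lindley_idle c k) = 0"
  proof (rule sum.neutral, rule ballI)
    fix k assume k: "k \<in> {1..n}"
    show "(d0 + y k) * lindley_idle c k = 0"
    proof (cases "0 < lindley_idle c k")
      case True
      then have "lindley_wait c (Suc k) = 0" using k by (simp add: lindley_idle_def)
      then have "y k = - d0"
        using k dual_greedy_less[of k n] by (cases "k = n") (auto simp: y_def dual_greedy_last)
      then show ?thesis by simp
    qed (simp add: lindley_idle_def)
  qed
  ultimately show ?thesis
    using recourse_cost_minus_dual[OF n feas, of d0 C lam y] by linarith
qed

lemma dual_le_g_val:
  assumes "1 \<le> n" "\<forall>k\<in>{1..n}. 0 \<le> lam k" "dual_feasible n d0 C lam y"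
  shows "(\<Sum>k=1..n. y k * (mu k - s k)) \<le> g_val n d0 C s mu lam"
  unfolding g_val_eq_Inf_recourse_cost
  by (rule cInf_greatest) (use recourse_feasible_lindley weak_duality[OF assms] in blast)+

lemma g_val_eq_dual_greedy:
  fixes mu s :: "nat \<Rightarrow> real"
  defines "c \<equiv> \<lambda>k. mu k - s k"
  assumes n: "1 \<le> n" and "- d0 \<le> C" and lam: "\<forall>k\<in>{1..n}. 0 \<le> lam k"
  shows "g_val n d0 C s mu lam = (\<Sum>k=1..n. dual_greedy n d0 C lam (lindley_wait c) k * (mu k - s k))"
    (is "_ = ?dual")
proof (rule antisym)
  have bdd: "bdd_below {recourse_cost n d0 C lam w v | w v. recourse_feasible n s mu w v}"
    using weak_duality[OF n lam dual_feasible_dual_greedy[OF assms(3) lam]]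
    unfolding bdd_below_def by blast
  have "g_val n d0 C s mu lam \<le> recourse_cost n d0 C lam (lindley_wait c) (lindley_idle c)"
    unfolding g_val_eq_Inf_recourse_cost c_def
    by (rule cInf_lower[OF _ bdd]) (use recourse_feasible_lindley in blast)
  then show "g_val n d0 C s mu lam \<le> ?dual"
    using complementary_slackness_lindley[OF n] unfolding c_def by simp
  show "?dual \<le> g_val n d0 C s mu lam"
    by (rule dual_le_g_val[OF n lam dual_feasible_dual_greedy[OF assms(3) lam]])
qed

section \<open>Flows on finite digraphs\<close>

definition outflow :: "('a \<times> 'a) set \<Rightarrow> ('a \<times> 'a \<Rightarrow> real) \<Rightarrow> 'a \<Rightarrow> real" where
  "outflow A z k = (\<Sum>l\<in>{l. (k, l) \<in> A}. z (k, l))"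

definition inflow :: "('a \<times> 'a) set \<Rightarrow> ('a \<times> 'a \<Rightarrow> real) \<Rightarrow> 'a \<Rightarrow> real" where
  "inflow A z k = (\<Sum>l\<in>{l. (l, k) \<in> A}. z (l, k))"

lemma flow_feasible_iff:
  "flow_feasible G A z \<longleftrightarrow> (\<forall>a\<in>A. 0 \<le> z a) \<and>
     (\<forall>k\<in>G. outflow A z k - inflow A z k = (if k = Src then 1 else if k = Snk then -1 else 0))"
  unfolding flow_feasible_def outflow_def inflow_def ..

lemma arc_flow_le_inflow:
  assumes "finite A" "flow_feasible G A z" "(k, l) \<in> A"
  shows "z (k, l) \<le> inflow A z l"
  unfolding inflow_def
proof (rule member_le_sum)
  show "finite {k. (k, l) \<in> A}"
    by (rule finite_subset[OF _ finite_imageI[OF assms(1), of fst]]) force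
qed (use assms in \<open>auto simp: flow_feasible_iff\<close>)

lemma sum_arcs_by_tail:
  fixes f :: "'a \<Rightarrow> real"
  assumes "finite G" "A \<subseteq> G \<times> G"
  shows "(\<Sum>a\<in>A. f (fst a) * z a) = (\<Sum>k\<in>G. f k * outflow A z k)"
proof -
  have "A = Sigma G (\<lambda>k. {l. (k, l) \<in> A})" using assms(2) by auto
  then have "(\<Sum>a\<in>A. f (fst a) * z a) = (\<Sum>(k, l)\<in>Sigma G (\<lambda>k. {l. (k, l) \<in> A}). f k * z (k, l))"
    by (simp add: case_prod_beta)
  also have "\<dots> = (\<Sum>k\<in>G. \<Sum>l\<in>{l. (k, l) \<in> A}. f k * z (k, l))"
    using assms by (intro sum.Sigma[symmetric]) (auto intro: finite_subset)
  finally show ?thesis by (simp add: outflow_def sum_distrib_left)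
qed

lemma sum_arcs_by_head:
  fixes f :: "'a \<Rightarrow> real"
  assumes "finite G" "A \<subseteq> G \<times> G"
  shows "(\<Sum>a\<in>A. f (snd a) * z a) = (\<Sum>k\<in>G. f k * inflow A z k)"
proof -
  have "(\<Sum>a\<in>A. f (snd a) * z a) = (\<Sum>a\<in>A\<inverse>. f (fst a) * z (prod.swap a))"
    by (rule sum.reindex_bij_witness[of _ prod.swap prod.swap]) auto
  also have "\<dots> = (\<Sum>k\<in>G. f k * outflow (A\<inverse>) (\<lambda>a. z (prod.swap a)) k)"
    using assms by (subst sum_arcs_by_tail) auto
  finally show ?thesis by (simp add: outflow_def inflow_def)
qed

lemma flow_value_le_potential:
  fixes pot :: "node \<Rightarrow> real"
  assumes G: "finite G" "A \<subseteq> G \<times> G" "Src \<in> G" "Snk \<in> G" and z: "flow_feasible G A z"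
    and drop: "\<And>a. a \<in> A \<Longrightarrow> len a * z a \<le> (pot (fst a) - pot (snd a)) * z a"
  shows "(\<Sum>a\<in>A. len a * z a) \<le> pot Src - pot Snk"
proof -
  have "(\<Sum>a\<in>A. len a * z a) \<le> (\<Sum>a\<in>A. pot (fst a) * z a) - (\<Sum>a\<in>A. pot (snd a) * z a)"
    unfolding sum_subtractf[symmetric] left_diff_distrib[symmetric] by (rule sum_mono) (rule drop)
  also have "\<dots> = (\<Sum>k\<in>G. pot k * (if k = Src then 1 else if k = Snk then -1 else 0))"
    using z unfolding sum_arcs_by_tail[OF G(1,2)] sum_arcs_by_head[OF G(1,2)]
      sum_subtractf[symmetric] right_diff_distrib[symmetric] flow_feasible_iff
    by (intro sum.cong) auto
  also have "\<dots> = (\<Sum>k\<in>G. (if k = Src then pot Src else 0) - (if k = Snk then pot Snk else 0))"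
    by (intro sum.cong) auto
  also have "\<dots> = pot Src - pot Snk"
    using G by (simp add: sum_subtractf)
  finally show ?thesis .
qed

lemma path_indicator_flows:
  fixes v :: "nat \<Rightarrow> 'a"
  assumes A: "finite A" and v: "inj_on v {..m}" and arcs: "\<And>t. t < m \<Longrightarrow> (v t, v (Suc t)) \<in> A"
  defines "z \<equiv> \<lambda>a. of_bool (a \<in> (\<lambda>t. (v t, v (Suc t))) ` {..<m})"
  shows "outflow A z k = (\<Sum>t<m. of_bool (v t = k))"
    and "inflow A z k = (\<Sum>t<m. of_bool (v (Suc t) = k))"
proof -
  let ?P = "(\<lambda>t. (v t, v (Suc t))) ` {..<m}"
  have PA: "?P \<subseteq> A" using arcs by auto
  have fin: "finite {l. (k, l) \<in> A}" "finite {l. (l, k) \<in> A}"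
    by (rule finite_subset[OF _ finite_imageI[OF A]], force)+
  have "{l. (k, l) \<in> A} \<inter> {l. (k, l) \<in> ?P} = (\<lambda>t. v (Suc t)) ` {t. t < m \<and> v t = k}"
    using PA by blast
  moreover have "inj_on (\<lambda>t. v (Suc t)) {t. t < m \<and> v t = k}"
    using v by (auto simp: inj_on_def)
  ultimately show "outflow A z k = (\<Sum>t<m. of_bool (v t = k))"
    unfolding z_def outflow_def by (simp add: fin card_image Int_def)
  have "{l. (l, k) \<in> A} \<inter> {l. (l, k) \<in> ?P} = v ` {t. t < m \<and> v (Suc t) = k}"
    using PA by blast
  moreover have "inj_on v {t. t < m \<and> v (Suc t) = k}"
    using v by (auto simp: inj_on_def)
  ultimately show "inflow A z k = (\<Sum>t<m. of_bool (v (Suc t) = k))"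
    unfolding z_def inflow_def by (simp add: fin card_image Int_def)
qed

lemma path_flow:
  fixes v :: "nat \<Rightarrow> node"
  assumes A: "finite A" and v: "inj_on v {..m}" "v 0 = Src" "v m = Snk"
    and arcs: "\<And>t. t < m \<Longrightarrow> (v t, v (Suc t)) \<in> A"
  defines "z \<equiv> \<lambda>a. of_bool (a \<in> (\<lambda>t. (v t, v (Suc t))) ` {..<m})"
  shows "flow_feasible G A z" and "(\<Sum>a\<in>A. len a * z a) = (\<Sum>t<m. len (v t, v (Suc t)))"
proof -
  have flows: "outflow A z k = (\<Sum>t<m. of_bool (v t = k))"
    "inflow A z k = (\<Sum>t<m. of_bool (v (Suc t) = k))" for k
    using path_indicator_flows[OF A v(1) arcs, of k] unfolding z_def by simp_all
  show "flow_feasible G A z"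
    unfolding flow_feasible_iff
  proof (intro conjI ballI)
    fix k
    have "(\<Sum>t<m. of_bool (v t = k)) - (\<Sum>t<m. of_bool (v (Suc t) = k))
        = (of_bool (v 0 = k) - of_bool (v m = k) :: real)"
      unfolding sum_subtractf[symmetric] by (rule sum_lessThan_telescope')
    then show "outflow A z k - inflow A z k = (if k = Src then 1 else if k = Snk then -1 else 0)"
      unfolding flows v(2,3) by auto
  qed (simp add: z_def)
  have "inj_on (\<lambda>t. (v t, v (Suc t))) {..<m}"
    using v(1) by (auto simp: inj_on_def)
  moreover have "(\<lambda>t. (v t, v (Suc t))) ` {..<m} \<subseteq> A" using arcs by auto
  ultimately show "(\<Sum>a\<in>A. len a * z a) = (\<Sum>t<m. len (v t, v (Suc t)))"
    unfolding z_def using A by (simp add: Int_absorb1 sum.reindex)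
qed

section \<open>Longest paths in the layered network\<close>

primrec noshow_count :: "(nat \<Rightarrow> real) \<Rightarrow> nat \<Rightarrow> nat" where
  "noshow_count lam 0 = 0"
| "noshow_count lam (Suc t) = noshow_count lam t + (if lam (Suc t) = 0 then 1 else 0)"

lemma noshow_count_mono: "t \<le> t' \<Longrightarrow> noshow_count lam t \<le> noshow_count lam t'"
  by (induction rule: dec_induct) auto

lemma noshow_count_eq_sum:
  "\<forall>r\<in>{1..t}. lam r \<in> {0, 1} \<Longrightarrow> real (noshow_count lam t) = (\<Sum>r=1..t. 1 - lam r)"
  by (induction t) auto

text \<open>The layer-\<open>t\<close> node \<open>Nd t lb y\<close> is the state \<open>(lb, y)\<close> at stage \<open>t\<close>: \<open>lb\<close> counts
  the no-shows among the first \<open>t\<close> patients and \<open>y\<close> is the dual variable of patient \<open>t\<close>.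
  The source plays the role of the stage-0 state \<open>(0, - d0)\<close>, from which \<open>step\<close> allows
  exactly the arcs leaving \<open>Src\<close>.\<close>

locale layered_network =
  fixes n K :: nat and d0 C :: real and F :: "nat \<Rightarrow> real \<Rightarrow> real \<Rightarrow> real"
  assumes n_pos: "1 \<le> n"
begin

definition states :: "nat \<Rightarrow> (nat \<times> real) set" where
  "states t = {..K} \<times> Ycal n d0 C t"

definition step :: "nat \<times> real \<Rightarrow> nat \<times> real \<Rightarrow> bool" where
  "step x b \<longleftrightarrow> (fst b = fst x \<or> fst b = Suc (fst x)) \<and>
     (snd x = - d0 \<or> snd x = snd b + (real (fst x) - real (fst b) + 1))"

definition step_len :: "nat \<Rightarrow> nat \<times> real \<Rightarrow> nat \<times> real \<Rightarrow> real" where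
  "step_len t x b = F t (real (fst x) - real (fst b) + 1) (snd b)"

definition tails :: "nat \<Rightarrow> nat \<times> real \<Rightarrow> (nat \<Rightarrow> nat \<times> real) set" where
  "tails i x = {P \<in> PiE {i..n} states. P i = x \<and> (\<forall>t\<in>{Suc i..n}. step (P (t-1)) (P t))}"

definition tail_len :: "nat \<Rightarrow> (nat \<Rightarrow> nat \<times> real) \<Rightarrow> real" where
  "tail_len i P = (\<Sum>t\<in>{Suc i..n}. step_len t (P (t-1)) (P t))"

definition longest_tail :: "nat \<Rightarrow> nat \<times> real \<Rightarrow> real" where
  "longest_tail i x = Max (tail_len i ` tails i x)"

lemma finite_states: "finite (states t)"
  unfolding states_def Ycal_def by (intro finite_SigmaI finite_UnI finite_image_set) auto

lemma finite_tails: "finite (tails i x)"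
proof -
  have "finite (PiE {i..n} states)" by (intro finite_PiE) (auto simp: finite_states)
  then show ?thesis unfolding tails_def by (rule rev_finite_subset) auto
qed

lemma tails_memD:
  assumes "P \<in> tails i x"
  shows "P i = x" and "\<And>t. i \<le> t \<Longrightarrow> t \<le> n \<Longrightarrow> P t \<in> states t"
    and "\<And>t. i < t \<Longrightarrow> t \<le> n \<Longrightarrow> step (P (t-1)) (P t)"
  using assms by (auto simp: tails_def PiE_iff)

lemma tail_len_le_longest_tail: "P \<in> tails i x \<Longrightarrow> tail_len i P \<le> longest_tail i x"
  unfolding longest_tail_def by (rule Max_ge) (simp_all add: finite_tails)

lemma longest_tail_attained:
  assumes "tails i x \<noteq> {}"
  shows "\<exists>P\<in>tails i x. tail_len i P = longest_tail i x"
proof -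
  have "longest_tail i x \<in> tail_len i ` tails i x"
    unfolding longest_tail_def by (rule Max_in) (use assms finite_tails in auto)
  then show ?thesis by auto
qed

lemma tails_last: "x \<in> states n \<Longrightarrow> tails n x \<noteq> {} \<and> longest_tail n x = 0"
proof -
  assume x: "x \<in> states n"
  have "(\<lambda>t\<in>{n..n}. x) \<in> tails n x" using x by (auto simp: tails_def)
  moreover have "tail_len n = (\<lambda>_. 0)" by (rule ext) (simp add: tail_len_def)
  ultimately show ?thesis unfolding longest_tail_def by (auto simp: image_constant)
qed

lemma tail_extend:
  assumes j: "j < n" and P: "P \<in> tails (Suc j) b" and x: "x \<in> states j" and "step x b"
  shows "P(j := x) \<in> tails j x"
    and "tail_len j (P(j := x)) = step_len (Suc j) x b + tail_len (Suc j) P"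
proof -
  have b: "P (Suc j) = b" and P_states: "P \<in> PiE {Suc j..n} states"
    and P_steps: "\<forall>t\<in>{Suc (Suc j)..n}. step (P (t-1)) (P t)"
    using P by (auto simp: tails_def)
  have "P(j := x) \<in> PiE {j..n} states"
    using P_states x j by (auto simp: PiE_iff extensional_def)
  moreover have "step ((P(j := x)) (t-1)) ((P(j := x)) t)" if "t \<in> {Suc j..n}" for t
    using that P_steps b \<open>step x b\<close> by (cases "t = Suc j") auto
  ultimately show "P(j := x) \<in> tails j x" by (simp add: tails_def)
  have "tail_len j (P(j := x)) = step_len (Suc j) x b +
      (\<Sum>t\<in>{Suc (Suc j)..n}. step_len t ((P(j := x)) (t-1)) ((P(j := x)) t))"
    unfolding tail_len_def using j b by (simp add: sum.atLeast_Suc_atMost)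
  also have "(\<Sum>t\<in>{Suc (Suc j)..n}. step_len t ((P(j := x)) (t-1)) ((P(j := x)) t)) = tail_len (Suc j) P"
    unfolding tail_len_def by (rule sum.cong) auto
  finally show "tail_len j (P(j := x)) = step_len (Suc j) x b + tail_len (Suc j) P" .
qed

lemma longest_tail_extend:
  assumes "j < n" "tails (Suc j) b \<noteq> {}" "x \<in> states j" "step x b"
  shows "tails j x \<noteq> {}" and "step_len (Suc j) x b + longest_tail (Suc j) b \<le> longest_tail j x"
proof -
  obtain P where "P \<in> tails (Suc j) b" "tail_len (Suc j) P = longest_tail (Suc j) b"
    using longest_tail_attained[OF assms(2)] by blast
  with tail_extend[OF assms(1) _ assms(3,4)] tail_len_le_longest_tail[of "P(j := x)" j x]
  show "tails j x \<noteq> {}" and "step_len (Suc j) x b + longest_tail (Suc j) b \<le> longest_tail j x"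
    by auto
qed

lemma noshow_dual_path:
  fixes lam w :: "nat \<Rightarrow> real"
  assumes lam01: "\<forall>k\<in>{1..n}. lam k \<in> {0, 1}" and noshows: "(\<Sum>i=1..n. 1 - lam i) \<le> real K"
    and w1: "w 1 = 0"
  defines "y \<equiv> dual_greedy n d0 C lam w"
  defines "P \<equiv> \<lambda>t\<in>{0..n}. (noshow_count lam t, y t)"
  shows "P \<in> tails 0 (0, - d0)" and "tail_len 0 P = (\<Sum>t=1..n. F t (lam t) (y t))"
proof -
  have count_le_K: "noshow_count lam t \<le> K" if "t \<le> n" for t
    using noshow_count_mono[OF that, of lam] noshow_count_eq_sum[of n lam] lam01 noshows by simp
  have lam_step: "real (noshow_count lam (t-1)) - real (noshow_count lam t) + 1 = lam t"
    if t: "t \<in> {1..n}" for t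
  proof -
    obtain r where "t = Suc r" using t by (cases t) auto
    then show ?thesis using lam01 t by auto
  qed
  have "step (P (t-1)) (P t)" if t: "t \<in> {1..n}" for t
  proof -
    obtain r where r: "t = Suc r" using t by (cases t) auto
    have "y r = - d0 \<or> y r = y t + lam t"
      using dual_greedy_less[of r n d0 C lam w] t r unfolding y_def by auto
    then show ?thesis using lam_step[OF t] t r by (auto simp: step_def P_def)
  qed
  moreover have "P t \<in> states t" if "t \<le> n" for t
    using that count_le_K dual_greedy_in_Ycal[OF that lam01] by (simp add: P_def states_def y_def)
  moreover have "P 0 = (0, - d0)"
    using w1 by (simp add: P_def y_def dual_greedy.simps)
  ultimately show "P \<in> tails 0 (0, - d0)"
    by (auto simp: tails_def PiE_iff P_def)
  show "tail_len 0 P = (\<Sum>t=1..n. F t (lam t) (y t))"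
    unfolding tail_len_def step_len_def P_def using lam_step by (intro sum.cong) auto
qed

definition state_node :: "nat \<Rightarrow> nat \<times> real \<Rightarrow> node" where
  "state_node t x = Nd t (fst x) (snd x)"

lemma state_node_eq_iff [simp]: "state_node t x = state_node t' x' \<longleftrightarrow> t = t' \<and> x = x'"
  and state_node_neq [simp]: "state_node t x \<noteq> Src" "state_node t x \<noteq> Snk"
    "Src \<noteq> state_node t x" "Snk \<noteq> state_node t x"
  by (auto simp: state_node_def prod_eq_iff)

lemma Layer_eq: "Layer n K d0 C t = state_node t ` states t"
  unfolding Layer_def states_def state_node_def by force

lemma Nodes_eq: "Nodes n K d0 C = (\<Union>t\<in>{1..n}. state_node t ` states t) \<union> {Src, Snk}"
  unfolding Nodes_def Layer_eq ..

lemma finite_Nodes: "finite (Nodes n K d0 C)"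
  unfolding Nodes_eq by (simp add: finite_states)

lemma Layer_Nd_iff: "Nd i lb y \<in> Layer n K d0 C t \<longleftrightarrow> i = t \<and> (lb, y) \<in> states t"
  unfolding Layer_def states_def by auto

lemma Arcs_cases:
  assumes "(k, l) \<in> Arcs n K d0 C"
  obtains (source) b where "k = Src" "l = state_node 1 b" "b \<in> states 1" "step (0, - d0) b"
  | (middle) j x b where "k = state_node j x" "l = state_node (Suc j) b" "1 \<le> j" "j < n"
      "x \<in> states j" "b \<in> states (Suc j)" "step x b"
  | (sink) x where "k = state_node n x" "l = Snk" "x \<in> states n"
proof -
  from assms consider
    (s) lb y where "k = Src" "l = Nd 1 lb y" "Nd 1 lb y \<in> Layer n K d0 C 1" "lb \<in> {0, 1}"
  | (m) i lb' y' lb y where "k = Nd (i-1) lb' y'" "l = Nd i lb y" "2 \<le> i" "i \<le> n"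
      "Nd (i-1) lb' y' \<in> Layer n K d0 C (i-1)" "Nd i lb y \<in> Layer n K d0 C i"
      "lb = lb' \<or> lb = lb' + 1" "y' = - d0 \<or> y' = y + (real lb' - real lb + 1)"
  | (e) "l = Snk" "k \<in> Layer n K d0 C n"
    unfolding Arcs_def by blast
  then show ?thesis
  proof cases
    case s
    then show ?thesis
      using that(1)[of "(lb, y)"] by (auto simp: Layer_Nd_iff step_def state_node_def)
  next
    case m
    then obtain j where "i = Suc j" by (cases i) auto
    with m show ?thesis
      using that(2)[of j "(lb', y')" "(lb, y)"] by (auto simp: Layer_Nd_iff step_def state_node_def)
  next
    case e
    then show ?thesis using that(3) by (auto simp: Layer_eq)
  qed
qed

lemma source_arc: "b \<in> states 1 \<Longrightarrow> step (0, - d0) b \<Longrightarrow> (Src, state_node 1 b) \<in> Arcs n K d0 C"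
  unfolding Arcs_def by (auto simp: Layer_Nd_iff step_def state_node_def)

lemma middle_arc:
  assumes "1 \<le> j" "j < n" "x \<in> states j" "b \<in> states (Suc j)" "step x b"
  shows "(state_node j x, state_node (Suc j) b) \<in> Arcs n K d0 C"
proof -
  have "\<exists>i lb' y' lb y. (state_node j x, state_node (Suc j) b) = (Nd (i-1) lb' y', Nd i lb y) \<and>
      2 \<le> i \<and> i \<le> n \<and> Nd (i-1) lb' y' \<in> Layer n K d0 C (i-1) \<and> Nd i lb y \<in> Layer n K d0 C i \<and>
      (lb = lb' \<or> lb = lb' + 1) \<and> (y' = - d0 \<or> y' = y + (real lb' - real lb + 1))"
    using assms
    by (intro exI[of _ "Suc j"] exI[of _ "fst x"] exI[of _ "snd x"] exI[of _ "fst b"] exI[of _ "snd b"])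
      (auto simp: Layer_Nd_iff step_def state_node_def)
  then show ?thesis unfolding Arcs_def by blast
qed

lemma sink_arc: "x \<in> states n \<Longrightarrow> (state_node n x, Snk) \<in> Arcs n K d0 C"
  unfolding Arcs_def by (auto simp: Layer_eq)

lemma Arcs_subset: "Arcs n K d0 C \<subseteq> Nodes n K d0 C \<times> Nodes n K d0 C"
proof
  fix a assume "a \<in> Arcs n K d0 C"
  then obtain k l where kl: "a = (k, l)" "(k, l) \<in> Arcs n K d0 C" by (cases a) auto
  from kl(2) have "(k, l) \<in> Nodes n K d0 C \<times> Nodes n K d0 C"
    using n_pos by (cases rule: Arcs_cases) (auto simp: Nodes_eq)
  with kl(1) show "a \<in> Nodes n K d0 C \<times> Nodes n K d0 C" by simp
qed

lemma finite_Arcs: "finite (Arcs n K d0 C)"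
  using finite_subset[OF Arcs_subset] finite_Nodes by blast

lemma arc_len_state_node [simp]:
  "arc_len F (Src, state_node t b) = step_len 1 (0, - d0) b"
  "arc_len F (state_node j x, state_node t b) = step_len t x b"
  "arc_len F (state_node j x, Snk) = 0"
  by (simp_all add: state_node_def step_len_def)

text \<open>Longest tails serve as node potentials. A node without a tail to the last layer carries
  no flow (\<open>dead_node_no_inflow\<close>), so its potential is immaterial and set to 0.\<close>

definition potential :: "node \<Rightarrow> real" where
  "potential k = (case k of Src \<Rightarrow> longest_tail 0 (0, - d0) | Snk \<Rightarrow> 0
     | Nd i lb y \<Rightarrow> (if tails i (lb, y) \<noteq> {} then longest_tail i (lb, y) else 0))"

lemma potential_simps [simp]:
  "potential Src = longest_tail 0 (0, - d0)"
  "potential Snk = 0"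
  "potential (state_node i x) = (if tails i x \<noteq> {} then longest_tail i x else 0)"
  by (simp_all add: potential_def state_node_def)

lemma dead_node_no_inflow:
  assumes z: "flow_feasible (Nodes n K d0 C) (Arcs n K d0 C) z"
    and i: "1 \<le> i" "i \<le> n" and x: "x \<in> states i" and dead: "tails i x = {}"
  shows "inflow (Arcs n K d0 C) z (state_node i x) = 0"
  using i(2) x dead i(1)
proof (induction i arbitrary: x rule: inc_induct)
  case base
  then show ?case using tails_last by blast
next
  case (step i)
  have "z (state_node i x, l) = 0" if l: "(state_node i x, l) \<in> Arcs n K d0 C" for l
  proof -
    from l step.hyps obtain b where b: "l = state_node (Suc i) b" "b \<in> states (Suc i)" "step x b"
      by (cases rule: Arcs_cases) auto
    then have "tails (Suc i) b = {}" using longest_tail_extend(1)[OF step.hyps(2)] step.prems by blast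
    then have "inflow (Arcs n K d0 C) z l = 0" using step.IH b by simp
    moreover have "0 \<le> z (state_node i x, l)" using z l by (simp add: flow_feasible_iff)
    ultimately show ?thesis using arc_flow_le_inflow[OF finite_Arcs z l] by linarith
  qed
  then have "outflow (Arcs n K d0 C) z (state_node i x) = 0"
    unfolding outflow_def by (intro sum.neutral) auto
  moreover have "state_node i x \<in> Nodes n K d0 C" using step by (auto simp: Nodes_eq)
  ultimately show ?case using z unfolding flow_feasible_iff by force
qed

lemma potential_drop:
  assumes z: "flow_feasible (Nodes n K d0 C) (Arcs n K d0 C) z" and a: "a \<in> Arcs n K d0 C"
  shows "arc_len F a * z a \<le> (potential (fst a) - potential (snd a)) * z a"
proof -
  obtain k l where kl: "a = (k, l)" "(k, l) \<in> Arcs n K d0 C" using a by (cases a) auto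
  have z_nonneg: "0 \<le> z a" using z a by (simp add: flow_feasible_iff)
  have dead: "z a = 0" if "l = state_node i b" "1 \<le> i" "i \<le> n" "b \<in> states i" "tails i b = {}" for i b
    using dead_node_no_inflow[OF z that(2-5)] arc_flow_le_inflow[OF finite_Arcs z kl(2)] z_nonneg kl that(1)
    by simp
  have "z a = 0 \<or> arc_len F a \<le> potential k - potential l"
    using kl(2)
  proof (cases rule: Arcs_cases)
    case (source b)
    have "(0, - d0) \<in> states 0" by (auto simp: states_def Ycal_def)
    then show ?thesis
      using source n_pos longest_tail_extend[of 0 b "(0, - d0)"] dead[of 1 b] kl
      by (cases "tails 1 b = {}") auto
  next
    case (middle j x b)
    then show ?thesis
      using longest_tail_extend[of j b x] dead[of "Suc j" b] kl
      by (cases "tails (Suc j) b = {}") auto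
  next
    case (sink x)
    then show ?thesis using tails_last[of x] kl by simp
  qed
  then show ?thesis using z_nonneg kl(1) by (auto intro: mult_right_mono)
qed

lemma flow_value_le_longest_tail:
  assumes "flow_feasible (Nodes n K d0 C) (Arcs n K d0 C) z"
  shows "(\<Sum>a\<in>Arcs n K d0 C. arc_len F a * z a) \<le> longest_tail 0 (0, - d0)"
  using flow_value_le_potential[OF finite_Nodes Arcs_subset _ _ assms potential_drop[OF assms]]
  by (simp add: Nodes_eq)

lemma tails_source_nonempty: "tails 0 (0, - d0) \<noteq> {}"
proof -
  have "(\<lambda>t\<in>{0..n}. (0, - d0)) \<in> tails 0 (0, - d0)"
    by (force simp: tails_def states_def Ycal_def step_def)
  then show ?thesis by blast
qed

definition source_path :: "(nat \<Rightarrow> nat \<times> real) \<Rightarrow> nat \<Rightarrow> node" where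
  "source_path P t = (if t = 0 then Src else if t = Suc n then Snk else state_node t (P t))"

lemma source_path_arc:
  assumes P: "P \<in> tails 0 (0, - d0)" and t: "t \<le> n"
  shows "(source_path P t, source_path P (Suc t)) \<in> Arcs n K d0 C"
proof -
  note P_states = tails_memD(2)[OF P] and P_steps = tails_memD(3)[OF P, of "Suc t"]
  consider "t = 0" | "1 \<le> t" "t < n" | "t = n" "1 \<le> t" using t n_pos by linarith
  then show ?thesis
  proof cases
    case 1
    then show ?thesis
      using source_arc P_states[of 1] P_steps tails_memD(1)[OF P] n_pos by (simp add: source_path_def)
  next
    case 2
    then show ?thesis
      using middle_arc P_states[of t] P_states[of "Suc t"] P_steps by (simp add: source_path_def)
  next
    case 3
    then show ?thesis using sink_arc P_states[of n] by (simp add: source_path_def)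
  qed
qed

lemma source_path_len:
  assumes "P \<in> tails 0 (0, - d0)"
  shows "(\<Sum>t<Suc n. arc_len F (source_path P t, source_path P (Suc t))) = tail_len 0 P"
proof -
  have "(\<Sum>t<Suc n. arc_len F (source_path P t, source_path P (Suc t)))
      = (\<Sum>t<n. arc_len F (source_path P t, source_path P (Suc t)))"
    using n_pos by (simp add: source_path_def)
  also have "\<dots> = (\<Sum>t<n. step_len (Suc t) (P t) (P (Suc t)))"
    by (rule sum.cong) (auto simp: source_path_def tails_memD(1)[OF assms])
  also have "\<dots> = tail_len 0 P"
    by (simp add: tail_len_def sum.atLeast1_atMost_eq)
  finally show ?thesis .
qed

lemma flow_value_longest_tail_attained:
  "\<exists>z. flow_feasible (Nodes n K d0 C) (Arcs n K d0 C) z \<and>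
       (\<Sum>a\<in>Arcs n K d0 C. arc_len F a * z a) = longest_tail 0 (0, - d0)"
proof -
  obtain P where P: "P \<in> tails 0 (0, - d0)" "tail_len 0 P = longest_tail 0 (0, - d0)"
    using longest_tail_attained[OF tails_source_nonempty] by blast
  have inj: "inj_on (source_path P) {..Suc n}" by (auto simp: inj_on_def source_path_def)
  have ends: "source_path P 0 = Src" "source_path P (Suc n) = Snk"
    by (simp_all add: source_path_def)
  have arcs: "(source_path P t, source_path P (Suc t)) \<in> Arcs n K d0 C" if "t < Suc n" for t
    using source_path_arc[OF P(1)] that by simp
  note path = path_flow[OF finite_Arcs inj ends arcs]
  show ?thesis
    using path(1)[of "Nodes n K d0 C"] path(2)[of "arc_len F"] source_path_len[OF P(1)] P(2) by auto
qed

end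

section \<open>The worst-case objective as a longest path\<close>

lemma f_val_attained:
  fixes uL uU s muh lamh :: "nat \<Rightarrow> real" and i :: nat and l y rho p :: real
  assumes "l \<in> {0, 1}" "uL i \<le> uU i" "0 < p"
  defines "h \<equiv> \<lambda>mu. y * (mu - s i) - rho * \<bar>mu - muh i\<bar> powr p - rho * \<bar>l - lamh i\<bar> powr p"
  shows "\<exists>mu\<in>{uL i * l..uU i * l}. f_val uL uU p muh lamh s rho i l y = h mu \<and>
           (\<forall>mu'\<in>{uL i * l..uU i * l}. h mu' \<le> h mu)"
proof -
  let ?I = "{uL i * l..uU i * l}"
  have "continuous_on ?I h"
    unfolding h_def using assms(3) by (intro continuous_intros continuous_on_powr') auto
  moreover have "?I \<noteq> {}" using assms(1,2) by auto
  ultimately obtain mu where mu: "mu \<in> ?I" "\<forall>mu'\<in>?I. h mu' \<le> h mu"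
    using continuous_attains_sup[OF compact_Icc] by blast
  have "f_val uL uU p muh lamh s rho i l y = Sup (h ` ?I)"
    unfolding f_val_def h_def by (simp add: setcompr_eq_image atLeastAtMost_def atLeast_def atMost_def Int_def)
  also have "\<dots> = h mu"
    using mu by (intro cSup_eq_maximum) auto
  finally show ?thesis using mu by blast
qed

lemma sum_penalised_split:
  fixes y mu lam s muh lamh :: "nat \<Rightarrow> real"
  shows "(\<Sum>k=1..n. y k * (mu k - s k))
           - rho * ((\<Sum>i=1..n. \<bar>mu i - muh i\<bar> powr p) + (\<Sum>i=1..n. \<bar>lam i - lamh i\<bar> powr p))
         = (\<Sum>t=1..n. y t * (mu t - s t) - rho * \<bar>mu t - muh t\<bar> powr p - rho * \<bar>lam t - lamh t\<bar> powr p)"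
  by (simp add: sum_subtractf sum_distrib_left sum.distrib algebra_simps)

locale noshow_network = layered_network n K d0 C "f_val uL uU p muh lamh s rho"
  for n K :: nat and d0 C :: real and uL uU :: "nat \<Rightarrow> real" and p :: real
    and muh lamh s :: "nat \<Rightarrow> real" and rho :: real +
  assumes d0_le_C: "- d0 \<le> C" and u_bounds: "\<And>i. i \<in> {1..n} \<Longrightarrow> uL i \<le> uU i" and p_pos: "0 < p"
begin

definition objective :: "(nat \<Rightarrow> real) \<Rightarrow> (nat \<Rightarrow> real) \<Rightarrow> real" where
  "objective mu lam = g_val n d0 C s mu lam
     - rho * ((\<Sum>i=1..n. \<bar>mu i - muh i\<bar> powr p) + (\<Sum>i=1..n. \<bar>lam i - lamh i\<bar> powr p))"

lemma omega'_eq_Sup_objective: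
  "omega' n K d0 C uL uU p muh lamh s rho = Sup {objective mu lam | mu lam. in_Xi n K uL uU mu lam}"
  unfolding omega'_def objective_def ..

lemma objective_le_longest_tail:
  assumes "in_Xi n K uL uU mu lam"
  shows "objective mu lam \<le> longest_tail 0 (0, - d0)"
proof -
  have lam01: "\<forall>k\<in>{1..n}. lam k \<in> {0, 1}" and noshows: "(\<Sum>i=1..n. 1 - lam i) \<le> real K"
    and mu: "\<forall>i\<in>{1..n}. uL i * lam i \<le> mu i \<and> mu i \<le> uU i * lam i"
    using assms unfolding in_Xi_def by auto
  define w where "w = lindley_wait (\<lambda>k. mu k - s k)"
  define y where "y = dual_greedy n d0 C lam w"
  have "w 1 = 0" by (simp add: w_def)
  note path = noshow_dual_path[where lam=lam and w=w, OF lam01 noshows this, folded y_def]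
  have "g_val n d0 C s mu lam = (\<Sum>k=1..n. y k * (mu k - s k))"
    unfolding y_def w_def by (rule g_val_eq_dual_greedy[OF n_pos d0_le_C]) (use lam01 in auto)
  then have "objective mu lam = (\<Sum>t=1..n.
      y t * (mu t - s t) - rho * \<bar>mu t - muh t\<bar> powr p - rho * \<bar>lam t - lamh t\<bar> powr p)"
    unfolding objective_def by (simp only: sum_penalised_split)
  also have "\<dots> \<le> (\<Sum>t=1..n. f_val uL uU p muh lamh s rho t (lam t) (y t))"
  proof (rule sum_mono)
    fix t assume t: "t \<in> {1..n}"
    then have "lam t \<in> {0, 1}" "uL t \<le> uU t" using lam01 u_bounds by simp_all
    then show "y t * (mu t - s t) - rho * \<bar>mu t - muh t\<bar> powr p - rho * \<bar>lam t - lamh t\<bar> powr p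
        \<le> f_val uL uU p muh lamh s rho t (lam t) (y t)"
      using f_val_attained[where uL=uL and uU=uU and i=t and y="y t" and s=s and rho=rho
          and muh=muh and lamh=lamh, OF _ _ p_pos] mu t
      by fastforce
  qed
  also have "\<dots> \<le> longest_tail 0 (0, - d0)"
    using tail_len_le_longest_tail[OF path(1)] path(2) by simp
  finally show ?thesis .
qed

lemma states_dual_bounds:
  "x \<in> states t \<Longrightarrow> - d0 \<le> snd x"
  "x \<in> states n \<Longrightarrow> snd x \<le> C"
proof -
  have "- d0 \<le> y" if "y \<in> Ycal n d0 C t" for y t
    using that d0_le_C unfolding Ycal_def by auto
  moreover have "y \<le> C" if "y \<in> Ycal n d0 C n" for y
    using that d0_le_C unfolding Ycal_def by auto
  ultimately show "x \<in> states t \<Longrightarrow> - d0 \<le> snd x" "x \<in> states n \<Longrightarrow> snd x \<le> C"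
    unfolding states_def mem_Times_iff by blast+
qed

lemma tail_noshow_dual:
  fixes P :: "nat \<Rightarrow> nat \<times> real"
  assumes P: "P \<in> tails 0 (0, - d0)"
  defines "lam \<equiv> \<lambda>t. real (fst (P (t-1))) - real (fst (P t)) + 1"
  shows "\<forall>k\<in>{1..n}. lam k \<in> {0, 1}" and "(\<Sum>i=1..n. 1 - lam i) \<le> real K"
    and "dual_feasible n d0 C lam (\<lambda>t. snd (P t))"
proof -
  have P_states: "\<And>t. t \<le> n \<Longrightarrow> P t \<in> states t"
    and P_steps: "\<And>t. t \<in> {1..n} \<Longrightarrow> step (P (t-1)) (P t)"
    using tails_memD[OF P] by auto
  show lam01: "\<forall>k\<in>{1..n}. lam k \<in> {0, 1}"
  proof
    fix k assume "k \<in> {1..n}"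
    then have "fst (P k) = fst (P (k-1)) \<or> fst (P k) = Suc (fst (P (k-1)))"
      using P_steps unfolding step_def by blast
    then show "lam k \<in> {0, 1}" by (auto simp: lam_def)
  qed
  have "(\<Sum>i=1..n. 1 - lam i) = real (fst (P n)) - real (fst (P 0))"
    unfolding lam_def using sum_telescope''[of 0 n "\<lambda>t. real (fst (P t))"] by simp
  also have "\<dots> \<le> real K"
    using tails_memD(1)[OF P] P_states[of n] by (simp add: states_def mem_Times_iff)
  finally show "(\<Sum>i=1..n. 1 - lam i) \<le> real K" .
  show "dual_feasible n d0 C lam (\<lambda>t. snd (P t))"
    unfolding dual_feasible_def
  proof (intro conjI ballI)
    fix k assume "k \<in> {1..n}"
    then show "- d0 \<le> snd (P k)" using states_dual_bounds(1)[OF P_states[of k]] by simp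
  next
    fix k assume k: "k \<in> {2..n}"
    then have "- d0 \<le> snd (P k)" using states_dual_bounds(1)[OF P_states[of k]] by simp
    moreover have "lam k \<in> {0, 1}" using lam01 k by simp
    moreover have "snd (P (k-1)) = - d0 \<or> snd (P (k-1)) = snd (P k) + lam k"
      using P_steps[of k] k unfolding step_def lam_def by simp
    ultimately show "snd (P (k-1)) \<le> snd (P k) + lam k" by auto
  next
    show "snd (P n) \<le> C" using states_dual_bounds(2)[OF P_states[of n]] by simp
  qed
qed

lemma longest_tail_le_objective:
  "\<exists>mu lam. in_Xi n K uL uU mu lam \<and> longest_tail 0 (0, - d0) \<le> objective mu lam"
proof -
  obtain P where P: "P \<in> tails 0 (0, - d0)" "tail_len 0 P = longest_tail 0 (0, - d0)"
    using longest_tail_attained[OF tails_source_nonempty] by blast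
  define lam where "lam t = real (fst (P (t-1))) - real (fst (P t)) + 1" for t
  define y where "y t = snd (P t)" for t
  define h where "h t m = y t * (m - s t) - rho * \<bar>m - muh t\<bar> powr p - rho * \<bar>lam t - lamh t\<bar> powr p"
    for t m
  note pattern = tail_noshow_dual[OF P(1), folded lam_def, folded y_def]
  have "\<forall>t\<in>{1..n}. \<exists>m. m \<in> {uL t * lam t..uU t * lam t} \<and>
      f_val uL uU p muh lamh s rho t (lam t) (y t) = h t m"
  proof
    fix t assume t: "t \<in> {1..n}"
    have "lam t \<in> {0, 1}" "uL t \<le> uU t" using pattern(1) u_bounds t by simp_all
    from f_val_attained[where uL=uL and uU=uU and i=t and y="y t" and s=s and rho=rho
        and muh=muh and lamh=lamh, OF this p_pos]
    show "\<exists>m. m \<in> {uL t * lam t..uU t * lam t} \<and> f_val uL uU p muh lamh s rho t (lam t) (y t) = h t m"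
      unfolding h_def by blast
  qed
  then obtain mu where mu: "\<forall>t\<in>{1..n}.
      mu t \<in> {uL t * lam t..uU t * lam t} \<and> f_val uL uU p muh lamh s rho t (lam t) (y t) = h t (mu t)"
    by (rule bchoice[elim_format]) blast
  have Xi: "in_Xi n K uL uU mu lam"
    using pattern(1,2) mu unfolding in_Xi_def atLeastAtMost_iff by blast
  have "longest_tail 0 (0, - d0) = (\<Sum>t=1..n. f_val uL uU p muh lamh s rho t (lam t) (y t))"
    unfolding P(2)[symmetric] tail_len_def step_len_def lam_def y_def by simp
  also have "\<dots> = (\<Sum>t=1..n. h t (mu t))"
    using mu by (intro sum.cong) simp_all
  also have "\<dots> = (\<Sum>k=1..n. y k * (mu k - s k))
      - rho * ((\<Sum>i=1..n. \<bar>mu i - muh i\<bar> powr p) + (\<Sum>i=1..n. \<bar>lam i - lamh i\<bar> powr p))"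
    unfolding sum_penalised_split h_def ..
  also have "\<dots> \<le> objective mu lam"
    unfolding objective_def using dual_le_g_val[OF n_pos _ pattern(3)] pattern(1) by fastforce
  finally show ?thesis using Xi by blast
qed

lemma omega'_eq_longest_tail: "omega' n K d0 C uL uU p muh lamh s rho = longest_tail 0 (0, - d0)"
proof -
  let ?S = "{objective mu lam | mu lam. in_Xi n K uL uU mu lam}"
  obtain mu lam where "in_Xi n K uL uU mu lam" and tail_le: "longest_tail 0 (0, - d0) \<le> objective mu lam"
    using longest_tail_le_objective by (elim exE conjE)
  then have mem: "objective mu lam \<in> ?S" by blast
  have upper: "x \<le> longest_tail 0 (0, - d0)" if "x \<in> ?S" for x
    using that objective_le_longest_tail by (elim CollectE exE conjE) simp
  have "Sup ?S \<le> longest_tail 0 (0, - d0)"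
    using mem upper by (intro cSup_least) blast+
  moreover have "longest_tail 0 (0, - d0) \<le> Sup ?S"
    using tail_le cSup_upper[OF mem] upper unfolding bdd_above_def by fastforce
  ultimately show ?thesis
    unfolding omega'_eq_Sup_objective by (rule antisym)
qed

end


theorem proposition5:
  fixes n N K j :: nat and T d0 C rho p :: real
    and uL uU s :: "nat \<Rightarrow> real"
    and muh lamh :: "nat \<Rightarrow> nat \<Rightarrow> real"
  assumes "n \<ge> 1" and "N \<ge> 1" and "T > 0"
    and "d0 \<ge> 0" and "C \<ge> 0"
    and "\<forall>i\<in>{1..n}. 0 \<le> uL i \<and> uL i < uU i"
    and "1 \<le> K" and "K \<le> n"
    and "\<forall>j'\<in>{1..N}. in_Xi n K uL uU (muh j') (lamh j')"
    and "j \<in> {1..N}" and "rho \<ge> 0" and "p \<ge> 1"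
    and "\<forall>i\<in>{1..n}. s i \<ge> 0" and "(\<Sum>i=1..n. s i) \<le> T"
  shows "let F = f_val uL uU p (muh j) (lamh j) s rho;
             G = Nodes n K d0 C; A = Arcs n K d0 C;
             w = omega' n K d0 C uL uU p (muh j) (lamh j) s rho
         in (\<exists>z. flow_feasible G A z \<and> (\<Sum>a\<in>A. arc_len F a * z a) = w) \<and>
            (\<forall>z. flow_feasible G A z \<longrightarrow> (\<Sum>a\<in>A. arc_len F a * z a) \<le> w)"
proof -
  interpret noshow_network n K d0 C uL uU p "muh j" "lamh j" s rho
    by unfold_locales (use assms in \<open>auto intro: less_imp_le\<close>)
  show ?thesis
    unfolding Let_def omega'_eq_longest_tail
    using flow_value_longest_tail_attained flow_value_le_longest_tail by blast
qed

end
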